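(* Assume $\beta>0$, $\theta\ne\eta$, and let $\mu$ (with density $\mu(x)$) be the unique minimizer of $I^{(\xi)}$ over $\mathfrak P$. Then: Case $\theta>\eta$ (set $\nu=\theta/\eta$, $\rho=\eta$): (i) if $\xi\in(-\gamma^2,0]$: $\mu(x)=\eta x^{\eta-1}\omega_\nu(x^\eta)$ where $\omega_\nu$ solves Problem 1 with $\kappa=\gamma^2-|\xi|$, $m_1=|\xi|/\kappa$, $n_1=-|\xi|$, $n_2=1-\gamma^2$, $\alpha=\theta$; (ii) if $\xi\in(0,1-\gamma^2]$: $\mu(x)=\eta x^{\eta-1}\omega_\nu(x^\eta)$ with Problem 1 and $\kappa=\gamma^2$, $m_1=\frac{\theta\xi}{\eta\kappa}$, $n_1=0$, $n_2=1-\gamma^2-\xi$, $\alpha=\theta$; (iii) if $\xi\in(1-\gamma^2,1]$: $\mu(x)=\eta x^{\eta-1}\omega_1(x^\eta)$ where $\omega_1$ solves Problem 2 with $\kappa=1-\xi$, $m_1=\frac{\theta\xi}{\eta\kappa}$, $n_1=1-\gamma^2-\xi$, $n_2=0$, $\alpha=\eta$. Case $\eta>\theta$ (set $\nu=\eta/\theta$, $\rho=\theta$): (i) if $\xi\in(-\gamma^2,0]$: $\mu(x)=\theta x^{\theta-1}\omega_1(x^\theta)$ with Problem 2 and $\kappa=\gamma^2-|\xi|$, $m_1=\frac{|\xi|\eta}{\kappa\theta}$, $n_1=-|\xi|$, $n_2=1-\gamma^2$, $\alpha=\theta$; (ii) if $\xi\in(0,1-\gamma^2]$: $\mu(x)=\theta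 x^{\theta-1}\omega_1(x^\theta)$ with Problem 2 and $\kappa=\gamma^2$, $m_1=\xi/\kappa$, $n_1=0$, $n_2=1-\gamma^2-\xi$, $\alpha=\theta$; (iii) if $\xi\in(1-\gamma^2,1]$: $\mu(x)=\theta x^{\theta-1}\omega_\nu(x^\theta)$ with Problem 1 and $\kappa=1-\xi$, $m_1=\xi/\kappa$, $n_1=1-\gamma^2-\xi$, $n_2=0$, $\alpha=\eta$.
   Context: Fix $\eta,\theta>0$, $\gamma\in(0,1)$, $\beta>0$, $\xi\in(-\gamma^2,1]$; $\kappa=\gamma^2-|\xi|$, $\gamma^2$, $1-\xi$ according as $\xi\in(-\gamma^2,0]$, $(0,1-\gamma^2]$, $(1-\gamma^2,1]$. $\mathcal P^c([0,h])$ is the set of probability measures on $[0,h]$ absolutely continuous with density $\le\frac1{cx}$; $\mathfrak P=\mathcal P^{\beta\kappa}([0,e^{-\beta(\gamma^2-\kappa)}])$. $I^{(\xi)}(\mu)=-H^{(\xi)}(\mu)-K^{(\xi)}(\mu)-M^{(\xi)}(\mu)$, $H^{(\xi)}(\mu)=\frac{\kappa^2}{2}\iint(\ln|x^\theta-y^\theta|+\ln|x^\eta-y^\eta|)d\mu d\mu$, and (i) $\xi\in(-\gamma^2,0]$: $K^{(\xi)}(\mu)=\kappa\int\int_{\gamma^2-1}^{|\xi|}\ln(1-x^\theta e^{\beta\theta u})du\,d\mu(x)$, $M^{(\xi)}(\mu)=\kappa\eta|\xi|\int\ln x\,d\mu$; (ii) $\xi\in(0,1-\gamma^2]$: $K^{(\xi)}(\mu)=\kappa\int\int_0^{1-\gamma^2-\xi}\ln(1-x^\theta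 e^{-\beta\theta u})du\,d\mu(x)$, $M^{(\xi)}(\mu)=\kappa\theta\xi\int\ln x\,d\mu$; (iii) $\xi\in(1-\gamma^2,1]$: $K^{(\xi)}(\mu)=\kappa\int\int_{1-\gamma^2-\xi}^{0}\ln(1-x^\eta e^{-\beta\eta u})du\,d\mu(x)$, $M^{(\xi)}(\mu)=\kappa\theta\xi\int\ln x\,d\mu$. Model problems: given $\nu>1$, $\beta,\kappa,\alpha,\rho>0$, $m_1\ge0$, $n_2\ge n_1$ with $n_1\alpha=-\rho(\gamma^2-\kappa)$, and $x_{\max}=e^{-\rho\beta(\gamma^2-\kappa)}$. Problem 1: minimize over $\omega\in\mathcal P^{\beta\rho\kappa}([0,x_{\max}])$ the functional $\mathcal I_\nu[\omega]=-\frac12\iint(\ln|x^\nu-y^\nu|+\ln|x-y|)\omega(dx)\omega(dy)-\frac1\kappa\int\int_{n_1}^{n_2}\ln(1-x^\nu e^{-\beta\alpha u})du\,\omega(dx)-m_1\int\ln x\,\omega(dx)$; its minimizer is denoted $\omega_\nu$. Problem 2: same with $\ln(1-x^\nu e^{-\beta\alpha u})$ replaced by $\ln(1-xe^{-\beta\alpha u})$; its minimizer is denoted $\omega_1$. *)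

theory Defs
  imports "HOL-Probability.Probability"
begin

definition PP :: "real \<Rightarrow> real \<Rightarrow> real measure set" where
  "PP c h = {M. \<exists>f. f \<in> borel_measurable borel \<and> (\<forall>x. 0 \<le> f x)
      \<and> (\<forall>x. x \<notin> {0..h} \<longrightarrow> f x = 0)
      \<and> (\<forall>x\<in>{0<..h}. f x \<le> 1 / (c * x))
      \<and> M = density lborel (\<lambda>x. ennreal (f x)) \<and> prob_space M}"

definition kap :: "real \<Rightarrow> real \<Rightarrow> real" where
  "kap gamma xi = (if xi \<le> 0 then gamma\<^sup>2 - \<bar>xi\<bar>
                   else if xi \<le> 1 - gamma\<^sup>2 then gamma\<^sup>2 else 1 - xi)"

definition Pfrak :: "real \<Rightarrow> real \<Rightarrow> real \<Rightarrow> real measure set" where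
  "Pfrak gamma beta xi = PP (beta * kap gamma xi) (exp (- beta * (gamma\<^sup>2 - kap gamma xi)))"

text \<open>All three pieces -H, -K, -M are nonnegative on frak P (the integrands are
  nonpositive there), so the functional is written as an extended nonnegative value,
  with value infinity when an integral diverges.\<close>
definition Ixi :: "real \<Rightarrow> real \<Rightarrow> real \<Rightarrow> real \<Rightarrow> real \<Rightarrow> real measure \<Rightarrow> ennreal" where
  "Ixi eta theta gamma beta xi M =
    (let k = kap gamma xi in
     ennreal (k\<^sup>2 / 2) *
       (\<integral>\<^sup>+x. \<integral>\<^sup>+y. ennreal (- (ln \<bar>x powr theta - y powr theta\<bar> + ln \<bar>x powr eta - y powr eta\<bar>)) \<partial>M \<partial>M)
     + (if xi \<le> 0 then
          ennreal k * (\<integral>\<^sup>+x. \<integral>\<^sup>+u. indicator {gamma\<^sup>2 - 1..\<bar>xi\<bar>} u *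
               ennreal (- ln (1 - x powr theta * exp (beta * theta * u))) \<partial>lborel \<partial>M)
          + ennreal (k * eta * \<bar>xi\<bar>) * (\<integral>\<^sup>+x. ennreal (- ln x) \<partial>M)
        else if xi \<le> 1 - gamma\<^sup>2 then
          ennreal k * (\<integral>\<^sup>+x. \<integral>\<^sup>+u. indicator {0..1 - gamma\<^sup>2 - xi} u *
               ennreal (- ln (1 - x powr theta * exp (- beta * theta * u))) \<partial>lborel \<partial>M)
          + ennreal (k * theta * xi) * (\<integral>\<^sup>+x. ennreal (- ln x) \<partial>M)
        else
          ennreal k * (\<integral>\<^sup>+x. \<integral>\<^sup>+u. indicator {1 - gamma\<^sup>2 - xi..0} u *
               ennreal (- ln (1 - x powr eta * exp (- beta * eta * u))) \<partial>lborel \<partial>M)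
          + ennreal (k * theta * xi) * (\<integral>\<^sup>+x. ennreal (- ln x) \<partial>M)))"

text \<open>Model functional; phi x = x powr nu gives Problem 1, phi x = x gives Problem 2.\<close>
definition model_I :: "real \<Rightarrow> (real \<Rightarrow> real) \<Rightarrow> real \<Rightarrow> real \<Rightarrow> real \<Rightarrow> real \<Rightarrow> real \<Rightarrow> real
    \<Rightarrow> real measure \<Rightarrow> ennreal" where
  "model_I nu phi beta kappa alpha m1 n1 n2 M =
     ennreal (1/2) *
       (\<integral>\<^sup>+x. \<integral>\<^sup>+y. ennreal (- (ln \<bar>x powr nu - y powr nu\<bar> + ln \<bar>x - y\<bar>)) \<partial>M \<partial>M)
     + ennreal (1 / kappa) * (\<integral>\<^sup>+x. \<integral>\<^sup>+u. indicator {n1..n2} u *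
               ennreal (- ln (1 - phi x * exp (- beta * alpha * u))) \<partial>lborel \<partial>M)
     + ennreal m1 * (\<integral>\<^sup>+x. ennreal (- ln x) \<partial>M)"

definition is_min :: "(real measure \<Rightarrow> ennreal) \<Rightarrow> real measure set \<Rightarrow> real measure \<Rightarrow> bool" where
  "is_min F S M \<longleftrightarrow> M \<in> S \<and> (\<forall>N\<in>S. F M \<le> F N)"

definition model_min :: "real \<Rightarrow> (real \<Rightarrow> real) \<Rightarrow> real \<Rightarrow> real \<Rightarrow> real \<Rightarrow> real \<Rightarrow> real \<Rightarrow> real
    \<Rightarrow> real \<Rightarrow> real \<Rightarrow> real measure \<Rightarrow> bool" where
  "model_min nu phi beta kappa alpha m1 n1 n2 rho gamma \<omega> \<longleftrightarrow>
     is_min (model_I nu phi beta kappa alpha m1 n1 n2)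
            (PP (beta * rho * kappa) (exp (- rho * beta * (gamma\<^sup>2 - kappa)))) \<omega>"

definition pulled_back :: "real measure \<Rightarrow> real \<Rightarrow> real measure \<Rightarrow> bool" where
  "pulled_back mu rho \<omega> \<longleftrightarrow> (\<exists>g. g \<in> borel_measurable borel \<and> (\<forall>t. 0 \<le> g t)
      \<and> \<omega> = density lborel (\<lambda>t. ennreal (g t))
      \<and> mu = density lborel (\<lambda>x. ennreal (if 0 < x then rho * x powr (rho - 1) * g (x powr rho) else 0)))"

end

theory Submission
  imports Defs
begin

(*
  Pushing a measure forward under x \<mapsto> x^r maps PP c h bijectively onto PP (c r) (h^r), the
  densities being related by mu(x) = r x^(r-1) omega(x^r). With r the smaller of eta and theta,
  x^theta and x^eta become t^nu and t (nu > 1), and -ln x becomes -(1/r) ln t. Hence in each regime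
  of xi the functional I^(xi) of mu is kappa^2 times the model functional of its push-forward omega
  (in regime (i) after reflecting u \<mapsto> -u in the K-integral), so the push-forward of the
  minimizer minimizes the model problem.
*)

lemma incseq_exp_intervals:
  fixes c :: real assumes "0 < c"
  shows "incseq (\<lambda>n::nat. {exp (- c * (real n + 1)) .. exp (c * (real n + 1))})"
  using assms by (auto simp: incseq_def intro: order_trans[rotated])

lemma UN_exp_intervals:
  fixes c :: real assumes c: "0 < c"
  shows "(\<Union>n::nat. {exp (- c * (real n + 1)) .. exp (c * (real n + 1))}) = {0<..}"
proof
  show "(\<Union>n::nat. {exp (- c * (real n + 1)) .. exp (c * (real n + 1))}) \<subseteq> {0<..}"
    by (auto intro: less_le_trans[OF exp_gt_zero])
  show "{0<..} \<subseteq> (\<Union>n::nat. {exp (- c * (real n + 1)) .. exp (c * (real n + 1))})"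
  proof
    fix x :: real assume x: "x \<in> {0<..}"
    obtain n :: nat where "\<bar>ln x\<bar> / c \<le> real n" using real_arch_simple by blast
    then have "\<bar>ln x\<bar> \<le> c * (real n + 1)" using c by (simp add: field_simps)
    then have "exp (- c * (real n + 1)) \<le> x" "ln x \<le> c * (real n + 1)"
      using x by (simp_all flip: ln_ge_iff)
    then show "x \<in> (\<Union>n::nat. {exp (- c * (real n + 1)) .. exp (c * (real n + 1))})"
      using x by (intro UN_I[of n]) (auto simp: ln_le_cancel_iff[symmetric])
  qed
qed

lemma nn_integral_powr_substitution:
  fixes F :: "real \<Rightarrow> ennreal" and r :: real
  assumes F[measurable]: "F \<in> borel_measurable borel" and r: "0 < r"
  shows "(\<integral>\<^sup>+t. F t * indicator {0<..} t \<partial>lborel)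
       = (\<integral>\<^sup>+x. F (x powr r) * ennreal (r * x powr (r - 1)) * indicator {0<..} x \<partial>lborel)"
proof -
  (* r x^(r-1) is unbounded near 0 when r < 1: substitute on compact intervals and pass to the limit. *)
  define I where "I c n = {exp (- c * (real n + 1)) .. exp (c * (real n + 1))}" for c :: real and n :: nat
  define G where "G x = F (x powr r) * ennreal (r * x powr (r - 1))" for x
  have [measurable]: "G \<in> borel_measurable borel" unfolding G_def by measurable
  have I_sets[measurable]: "I c n \<in> sets borel" for c n unfolding I_def by simp
  have on_I: "emeasure (density lborel F) (I r n) = emeasure (density lborel G) (I 1 n)" for n
  proof -
    have "emeasure (density lborel F) (I r n)
        = (\<integral>\<^sup>+t. F t * indicator {exp (- (real n + 1)) powr r .. exp (real n + 1) powr r} t \<partial>lborel)"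
      by (simp add: emeasure_density I_def exp_powr_real algebra_simps)
    also have "\<dots> = (\<integral>\<^sup>+x. G x * indicator (I 1 n) x \<partial>lborel)"
      unfolding G_def I_def mult_1 mult_minus1
      by (rule nn_integral_substitution_aux[where g = "\<lambda>x. x powr r"])
         (use r in \<open>auto intro!: derivative_eq_intros continuous_intros
                   intro: less_le_trans[OF exp_gt_zero]\<close>)
    finally show ?thesis by (simp add: emeasure_density)
  qed
  have "(\<integral>\<^sup>+t. F t * indicator {0<..} t \<partial>lborel) = emeasure (density lborel F) {0<..}"
    by (simp add: emeasure_density)
  also have "\<dots> = (SUP n. emeasure (density lborel F) (I r n))"
    using UN_exp_intervals[OF r] incseq_exp_intervals[OF r]
    by (subst SUP_emeasure_incseq) (auto simp: I_def[abs_def])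
  also have "\<dots> = (SUP n. emeasure (density lborel G) (I 1 n))"
    by (simp add: on_I)
  also have "\<dots> = emeasure (density lborel G) {0<..}"
    using UN_exp_intervals[of 1] incseq_exp_intervals[of 1]
    by (subst SUP_emeasure_incseq) (auto simp: I_def[abs_def])
  also have "\<dots> = (\<integral>\<^sup>+x. G x * indicator {0<..} x \<partial>lborel)"
    by (simp add: emeasure_density)
  finally show ?thesis unfolding G_def .
qed

definition powr_push_density :: "(real \<Rightarrow> real) \<Rightarrow> real \<Rightarrow> real \<Rightarrow> real" where
  "powr_push_density f r t = (if 0 < t then f (t powr (1/r)) * (1/r) * t powr (1/r - 1) else 0)"

lemma powr_push_density_measurable[measurable]:
  assumes [measurable]: "f \<in> borel_measurable borel"
  shows "powr_push_density f r \<in> borel_measurable borel"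
  unfolding powr_push_density_def by measurable

lemma powr_push_density_nonneg: "(\<And>x. 0 \<le> f x) \<Longrightarrow> 0 < r \<Longrightarrow> 0 \<le> powr_push_density f r t"
  unfolding powr_push_density_def by auto

lemma powr_push_density_powr:
  assumes "0 < r" "0 < x"
  shows "powr_push_density f r (x powr r) * (r * x powr (r - 1)) = f x"
proof -
  have "(x powr r) powr (1/r - 1) * x powr (r - 1) = 1"
    using assms by (simp add: powr_powr powr_add[symmetric] field_simps)
  moreover have "(x powr r) powr (1/r) = x" using assms by (simp add: powr_powr)
  ultimately show ?thesis using assms unfolding powr_push_density_def by (simp add: field_simps)
qed

lemma distr_powr_density:
  fixes f :: "real \<Rightarrow> real" and r :: real
  assumes f[measurable]: "f \<in> borel_measurable borel" and f_nonneg: "\<And>x. 0 \<le> f x"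
    and f_neg: "\<And>x. x < 0 \<Longrightarrow> f x = 0" and r: "0 < r"
  shows "distr (density lborel f) lborel (\<lambda>x. x powr r) = density lborel (powr_push_density f r)"
proof (rule measure_eqI)
  fix A assume "A \<in> sets (distr (density lborel f) lborel (\<lambda>x. x powr r))"
  then have A[measurable]: "A \<in> sets borel" by simp
  let ?g = "powr_push_density f r"
  have "emeasure (distr (density lborel f) lborel (\<lambda>x. x powr r)) A
      = emeasure (density lborel f) ((\<lambda>x. x powr r) -` A)"
    by (simp add: emeasure_distr)
  also have "\<dots> = (\<integral>\<^sup>+x. ennreal (f x) * indicator ((\<lambda>x. x powr r) -` A) x \<partial>lborel)"
    using measurable_sets[of "\<lambda>x. x powr r" borel borel A] by (simp add: emeasure_density)
  also have "\<dots> = (\<integral>\<^sup>+x. (ennreal (?g (x powr r)) * indicator A (x powr r))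
                      * ennreal (r * x powr (r - 1)) * indicator {0<..} x \<partial>lborel)"
  proof (rule nn_integral_cong_AE)
    show "AE x in lborel. ennreal (f x) * indicator ((\<lambda>x. x powr r) -` A) x
        = (ennreal (?g (x powr r)) * indicator A (x powr r)) * ennreal (r * x powr (r - 1)) * indicator {0<..} x"
      using AE_lborel_singleton[of 0]
    proof eventually_elim
      case (elim x)
      show ?case
      proof (cases "0 < x")
        case True
        then have "ennreal (?g (x powr r)) * ennreal (r * x powr (r - 1)) = ennreal (f x)"
          using powr_push_density_powr[OF r True, of f] r
          by (simp add: ennreal_mult'[symmetric] powr_push_density_nonneg f_nonneg)
        then show ?thesis using True by (simp add: mult_ac indicator_vimage)
      qed (use elim f_neg[of x] in \<open>auto simp: indicator_vimage\<close>)
    qed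
  qed
  also have "\<dots> = (\<integral>\<^sup>+t. (ennreal (?g t) * indicator A t) * indicator {0<..} t \<partial>lborel)"
    by (rule nn_integral_powr_substitution[symmetric]) (auto simp: r)
  also have "\<dots> = emeasure (density lborel ?g) A"
    by (auto simp: emeasure_density powr_push_density_def indicator_def intro!: nn_integral_cong)
  finally show "emeasure (distr (density lborel f) lborel (\<lambda>x. x powr r)) A
      = emeasure (density lborel ?g) A" .
qed simp

lemma PP_sets: "M \<in> PP c h \<Longrightarrow> sets M = sets borel"
  unfolding PP_def by auto

lemma PP_prob_space: "M \<in> PP c h \<Longrightarrow> prob_space M"
  unfolding PP_def by auto

lemma PP_imp_pos:
  assumes "M \<in> PP c h" shows "0 < c"
proof (rule ccontr)
  assume c: "\<not> 0 < c"
  from assms obtain f where f[measurable]: "f \<in> borel_measurable borel"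
    and f_nonneg: "\<forall>x. 0 \<le> f x" and f_out: "\<forall>x. x \<notin> {0..h} \<longrightarrow> f x = 0"
    and f_bound: "\<forall>x\<in>{0<..h}. f x \<le> 1 / (c * x)"
    and M: "M = density lborel (\<lambda>x. ennreal (f x))" and "prob_space M"
    unfolding PP_def by blast
  have "f x = 0" if "x \<noteq> 0" for x
  proof (cases "x \<in> {0<..h}")
    case True
    then have "1 / (c * x) \<le> 0" using c by (auto simp: divide_le_0_iff mult_le_0_iff)
    then show ?thesis using f_bound f_nonneg True by (meson order_antisym order_trans)
  qed (use f_out that in auto)
  then have "M = density lborel (\<lambda>x. 0)"
    unfolding M using AE_lborel_singleton[of 0] by (intro density_cong) auto
  then have "emeasure M (space M) = 0" by (simp add: emeasure_density)
  with \<open>prob_space M\<close> show False by (simp add: prob_space.emeasure_space_1)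
qed

lemma distr_powr_PP:
  assumes M: "M \<in> PP c h" and r: "0 < r" and h: "0 < h"
  shows "distr M lborel (\<lambda>x. x powr r) \<in> PP (c * r) (h powr r)"
proof -
  have c: "0 < c" using PP_imp_pos[OF M] .
  from M obtain f where f[measurable]: "f \<in> borel_measurable borel" and f_nonneg: "\<forall>x. 0 \<le> f x"
    and f_out: "\<forall>x. x \<notin> {0..h} \<longrightarrow> f x = 0" and f_bound: "\<forall>x\<in>{0<..h}. f x \<le> 1 / (c * x)"
    and M_eq: "M = density lborel (\<lambda>x. ennreal (f x))" and "prob_space M"
    unfolding PP_def by blast
  let ?g = "powr_push_density f r"
  have "?g t = 0" if "t \<notin> {0..h powr r}" for t
  proof (cases "0 < t")
    case True
    then have "h powr r < t" using that by auto
    then have "(h powr r) powr (1/r) < t powr (1/r)" using h r by (intro powr_less_mono2) auto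
    then show ?thesis using f_out h r unfolding powr_push_density_def by (auto simp: powr_powr)
  qed (auto simp: powr_push_density_def)
  moreover have "?g t \<le> 1 / (c * r * t)" if t: "t \<in> {0<..h powr r}" for t
  proof -
    have "t powr (1/r) \<le> (h powr r) powr (1/r)" using t r by (intro powr_mono2) auto
    then have "f (t powr (1/r)) \<le> 1 / (c * t powr (1/r))" using f_bound t h r by (auto simp: powr_powr)
    then have "f (t powr (1/r)) * ((1/r) * t powr (1/r - 1))
        \<le> 1 / (c * t powr (1/r)) * ((1/r) * t powr (1/r - 1))"
      using r by (intro mult_right_mono) auto
    then have "?g t \<le> 1 / (c * t powr (1/r)) * ((1/r) * t powr (1/r - 1))"
      using t by (simp add: powr_push_density_def mult.assoc)
    also have "\<dots> = 1 / (c * r * t)"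
      using t c r powr_diff[of t "1/r" 1] by (simp add: field_simps)
    finally show ?thesis .
  qed
  moreover have "distr M lborel (\<lambda>x. x powr r) = density lborel ?g"
    unfolding M_eq using f_nonneg f_out r by (intro distr_powr_density) auto
  moreover have "prob_space (distr M lborel (\<lambda>x. x powr r))"
    using \<open>prob_space M\<close> by (intro prob_space.prob_space_distr) (auto simp: M_eq)
  ultimately show ?thesis
    unfolding PP_def using f_nonneg r by (auto intro!: exI[of _ ?g] powr_push_density_nonneg)
qed

lemma pulled_back_distr_powr:
  assumes M: "M \<in> PP c h" and r: "0 < r"
  shows "pulled_back M r (distr M lborel (\<lambda>x. x powr r))"
proof -
  from M obtain f where f[measurable]: "f \<in> borel_measurable borel" and f_nonneg: "\<forall>x. 0 \<le> f x"
    and f_out: "\<forall>x. x \<notin> {0..h} \<longrightarrow> f x = 0" and M_eq: "M = density lborel (\<lambda>x. ennreal (f x))"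
    unfolding PP_def by blast
  let ?g = "powr_push_density f r"
  have "distr M lborel (\<lambda>x. x powr r) = density lborel ?g"
    unfolding M_eq using f_nonneg f_out r by (intro distr_powr_density) auto
  moreover have "M = density lborel (\<lambda>x. ennreal (if 0 < x then r * x powr (r - 1) * ?g (x powr r) else 0))"
    unfolding M_eq
  proof (intro density_cong)
    show "AE x in lborel. ennreal (f x) = ennreal (if 0 < x then r * x powr (r - 1) * ?g (x powr r) else 0)"
      using AE_lborel_singleton[of 0]
      by eventually_elim (use f_out powr_push_density_powr[OF r, of _ f] in \<open>auto simp: mult_ac\<close>)
  qed measurable
  ultimately show ?thesis
    unfolding pulled_back_def using f_nonneg r by (auto intro!: exI[of _ ?g] powr_push_density_nonneg)
qed

lemma distr_powr_inverse:
  assumes N: "N \<in> PP c h" and r: "0 < r"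
  shows "distr (distr N lborel (\<lambda>x. x powr (1/r))) lborel (\<lambda>x. x powr r) = N"
proof -
  from N obtain f where f[measurable]: "f \<in> borel_measurable borel" and f_out: "\<forall>x. x \<notin> {0..h} \<longrightarrow> f x = 0"
    and N_eq: "N = density lborel (\<lambda>x. ennreal (f x))"
    unfolding PP_def by blast
  have sets_N: "sets N = sets borel" by (simp add: N_eq)
  have "AE x in N. 0 \<le> x"
    unfolding N_eq using f_out by (subst AE_density) (auto intro!: AE_I2)
  then have "AE x in N. ((\<lambda>x. x powr r) \<circ> (\<lambda>x. x powr (1/r))) x = x"
    by eventually_elim (use r in \<open>auto simp: powr_powr\<close>)
  then have "distr N lborel ((\<lambda>x. x powr r) \<circ> (\<lambda>x. x powr (1/r))) = distr N N (\<lambda>x. x)"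
    by (intro distr_cong_AE) (auto simp: sets_N measurable_cong_sets[OF sets_N refl]
        measurable_cong_sets[OF refl sets_N])
  then show ?thesis
    by (subst distr_distr) (auto simp: distr_id2 measurable_cong_sets[OF sets_N refl])
qed

lemma is_min_distr_powr:
  fixes I J :: "real measure \<Rightarrow> ennreal"
  assumes r: "0 < r" and k: "0 < k" and h: "0 < h"
    and min: "is_min I (PP c h) mu"
    and I_eq: "\<And>M. M \<in> PP c h \<Longrightarrow> I M = ennreal k * J (distr M lborel (\<lambda>x. x powr r))"
  shows "is_min J (PP (c * r) (h powr r)) (distr mu lborel (\<lambda>x. x powr r))"
  unfolding is_min_def
proof (intro conjI ballI)
  have mu: "mu \<in> PP c h" using min by (simp add: is_min_def)
  then show "distr mu lborel (\<lambda>x. x powr r) \<in> PP (c * r) (h powr r)"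
    by (rule distr_powr_PP[OF _ r h])
  fix N assume N: "N \<in> PP (c * r) (h powr r)"
  define M where "M = distr N lborel (\<lambda>x. x powr (1/r))"
  have "M \<in> PP (c * r * (1/r)) ((h powr r) powr (1/r))"
    unfolding M_def using N r h by (intro distr_powr_PP) auto
  then have M_PP: "M \<in> PP c h" using r h by (simp add: powr_powr)
  have "ennreal k * J (distr mu lborel (\<lambda>x. x powr r)) = I mu" using I_eq[OF mu] by simp
  also have "\<dots> \<le> I M" using min M_PP by (simp add: is_min_def)
  also have "\<dots> = ennreal k * J N"
    using I_eq[OF M_PP] distr_powr_inverse[OF N r] by (simp add: M_def)
  finally show "J (distr mu lborel (\<lambda>x. x powr r)) \<le> J N"
    using k by (simp add: ennreal_mult_le_mult_iff)
qed

lemma nn_integral_nn_integral_distr: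
  fixes F :: "real \<Rightarrow> real \<Rightarrow> ennreal"
  assumes "prob_space M" and sets_M: "sets M = sets borel"
    and T[measurable]: "T \<in> borel_measurable borel"
    and F[measurable]: "(\<lambda>(a, b). F a b) \<in> borel_measurable (borel \<Otimes>\<^sub>M borel)"
  shows "(\<integral>\<^sup>+t. \<integral>\<^sup>+s. F t s \<partial>distr M lborel T \<partial>distr M lborel T) = (\<integral>\<^sup>+x. \<integral>\<^sup>+y. F (T x) (T y) \<partial>M \<partial>M)"
proof -
  interpret prob_space M by fact
  have T_M: "T \<in> measurable M lborel" using T by (simp add: measurable_cong_sets[OF sets_M refl])
  have "sets (borel \<Otimes>\<^sub>M M) = sets (borel \<Otimes>\<^sub>M borel)"
    by (rule sets_pair_measure_cong) (simp_all add: sets_M)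
  moreover have "(\<lambda>(t, y). F t (T y)) \<in> borel_measurable (borel \<Otimes>\<^sub>M borel)" by measurable
  ultimately have "(\<lambda>(t, y). F t (T y)) \<in> borel_measurable (borel \<Otimes>\<^sub>M M)"
    using measurable_cong_sets by blast
  then have "(\<lambda>t. \<integral>\<^sup>+y. F t (T y) \<partial>M) \<in> borel_measurable borel"
    using borel_measurable_nn_integral[of "\<lambda>t y. F t (T y)" borel] by simp
  then show ?thesis
    by (simp add: nn_integral_distr[OF T_M])
qed

lemma model_I_distr_powr:
  fixes phi :: "real \<Rightarrow> real"
  assumes "prob_space M" and sets_M: "sets M = sets borel" and r: "0 < r"
    and [measurable]: "phi \<in> borel_measurable borel"
  shows "model_I nu phi beta kappa alpha m1 n1 n2 (distr M lborel (\<lambda>x. x powr r)) =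
     ennreal (1/2) *
       (\<integral>\<^sup>+x. \<integral>\<^sup>+y. ennreal (- (ln \<bar>(x powr r) powr nu - (y powr r) powr nu\<bar> + ln \<bar>x powr r - y powr r\<bar>)) \<partial>M \<partial>M)
     + ennreal (1 / kappa) * (\<integral>\<^sup>+x. \<integral>\<^sup>+u. indicator {n1..n2} u *
               ennreal (- ln (1 - phi (x powr r) * exp (- beta * alpha * u))) \<partial>lborel \<partial>M)
     + ennreal m1 * (ennreal r * (\<integral>\<^sup>+x. ennreal (- ln x) \<partial>M))"
proof -
  have T[measurable]: "(\<lambda>x::real. x powr r) \<in> measurable M lborel"
    by (simp add: measurable_cong_sets[OF sets_M refl])
  have "(\<lambda>x. ennreal (- ln x)) \<in> borel_measurable M"
    by (simp add: measurable_cong_sets[OF sets_M refl])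
  then have "(\<integral>\<^sup>+x. ennreal (- ln (x powr r)) \<partial>M) = ennreal r * (\<integral>\<^sup>+x. ennreal (- ln x) \<partial>M)"
    using r by (simp add: ennreal_mult'[symmetric] nn_integral_cmult[symmetric])
  moreover have "(\<integral>\<^sup>+t. \<integral>\<^sup>+s. ennreal (- (ln \<bar>t powr nu - s powr nu\<bar> + ln \<bar>t - s\<bar>))
                  \<partial>distr M lborel (\<lambda>x. x powr r) \<partial>distr M lborel (\<lambda>x. x powr r))
     = (\<integral>\<^sup>+x. \<integral>\<^sup>+y. ennreal (- (ln \<bar>(x powr r) powr nu - (y powr r) powr nu\<bar> + ln \<bar>x powr r - y powr r\<bar>)) \<partial>M \<partial>M)"
    by (rule nn_integral_nn_integral_distr[OF assms(1) sets_M]) measurable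
  moreover have "(\<integral>\<^sup>+t. ennreal (- ln t) \<partial>distr M lborel (\<lambda>x. x powr r))
      = (\<integral>\<^sup>+x. ennreal (- ln (x powr r)) \<partial>M)"
    by (rule nn_integral_distr[OF T]) measurable
  moreover have "(\<integral>\<^sup>+t. \<integral>\<^sup>+u. indicator {n1..n2} u * ennreal (- ln (1 - phi t * exp (- beta * alpha * u))) \<partial>lborel
                  \<partial>distr M lborel (\<lambda>x. x powr r))
     = (\<integral>\<^sup>+x. \<integral>\<^sup>+u. indicator {n1..n2} u * ennreal (- ln (1 - phi (x powr r) * exp (- beta * alpha * u))) \<partial>lborel \<partial>M)"
    by (rule nn_integral_distr[OF T]) measurable
  ultimately show ?thesis
    unfolding model_I_def by simp
qed

lemma nn_integral_indicator_reflect: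
  fixes G :: "real \<Rightarrow> ennreal"
  assumes [measurable]: "G \<in> borel_measurable borel"
  shows "(\<integral>\<^sup>+u. indicator {a..b} u * G u \<partial>lborel) = (\<integral>\<^sup>+u. indicator {-b..-a} u * G (- u) \<partial>lborel)"
  using nn_integral_real_affine[of "\<lambda>u. indicator {a..b} u * G u" "-1" 0]
  by (auto simp: indicator_def intro!: nn_integral_cong)

lemma ennreal_factor_square:
  fixes A B C :: ennreal and k m r :: real
  assumes "0 < k" "0 \<le> m" "0 < r" "c = k\<^sup>2 * m * r"
  shows "ennreal (k\<^sup>2 / 2) * A + (ennreal k * B + ennreal c * C)
       = ennreal (k\<^sup>2) * (ennreal (1/2) * A + ennreal (1/k) * B + ennreal m * (ennreal r * C))"
proof -
  have "ennreal (k\<^sup>2) * ennreal (1/2) = ennreal (k\<^sup>2 / 2)"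
    by (subst ennreal_mult[symmetric]) auto
  moreover have "ennreal (k\<^sup>2) * ennreal (1/k) = ennreal k"
    using assms by (simp add: ennreal_mult'[symmetric] power2_eq_square)
  moreover have "ennreal (k\<^sup>2) * (ennreal m * ennreal r) = ennreal c"
    using assms by (simp add: ennreal_mult[symmetric] mult.assoc)
  ultimately show ?thesis
    by (simp add: distrib_left add.assoc mult.assoc[symmetric])
qed

lemma Ixi_xi_nonpos:
  assumes "xi \<le> 0"
  shows "Ixi eta theta gamma beta xi M =
    ennreal ((gamma\<^sup>2 - \<bar>xi\<bar>)\<^sup>2 / 2) *
       (\<integral>\<^sup>+x. \<integral>\<^sup>+y. ennreal (- (ln \<bar>x powr theta - y powr theta\<bar> + ln \<bar>x powr eta - y powr eta\<bar>)) \<partial>M \<partial>M)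
    + (ennreal (gamma\<^sup>2 - \<bar>xi\<bar>) * (\<integral>\<^sup>+x. \<integral>\<^sup>+u. indicator {gamma\<^sup>2 - 1..\<bar>xi\<bar>} u *
               ennreal (- ln (1 - x powr theta * exp (beta * theta * u))) \<partial>lborel \<partial>M)
     + ennreal ((gamma\<^sup>2 - \<bar>xi\<bar>) * eta * \<bar>xi\<bar>) * (\<integral>\<^sup>+x. ennreal (- ln x) \<partial>M))"
  using assms unfolding Ixi_def Let_def kap_def by simp

lemma Ixi_xi_mid:
  assumes "0 < xi" "xi \<le> 1 - gamma\<^sup>2"
  shows "Ixi eta theta gamma beta xi M =
    ennreal ((gamma\<^sup>2)\<^sup>2 / 2) *
       (\<integral>\<^sup>+x. \<integral>\<^sup>+y. ennreal (- (ln \<bar>x powr theta - y powr theta\<bar> + ln \<bar>x powr eta - y powr eta\<bar>)) \<partial>M \<partial>M)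
    + (ennreal (gamma\<^sup>2) * (\<integral>\<^sup>+x. \<integral>\<^sup>+u. indicator {0..1 - gamma\<^sup>2 - xi} u *
               ennreal (- ln (1 - x powr theta * exp (- beta * theta * u))) \<partial>lborel \<partial>M)
     + ennreal (gamma\<^sup>2 * theta * xi) * (\<integral>\<^sup>+x. ennreal (- ln x) \<partial>M))"
  using assms unfolding Ixi_def Let_def kap_def by simp

lemma Ixi_xi_upper:
  assumes "1 - gamma\<^sup>2 < xi" "0 < xi"
  shows "Ixi eta theta gamma beta xi M =
    ennreal ((1 - xi)\<^sup>2 / 2) *
       (\<integral>\<^sup>+x. \<integral>\<^sup>+y. ennreal (- (ln \<bar>x powr theta - y powr theta\<bar> + ln \<bar>x powr eta - y powr eta\<bar>)) \<partial>M \<partial>M)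
    + (ennreal (1 - xi) * (\<integral>\<^sup>+x. \<integral>\<^sup>+u. indicator {1 - gamma\<^sup>2 - xi..0} u *
               ennreal (- ln (1 - x powr eta * exp (- beta * eta * u))) \<partial>lborel \<partial>M)
     + ennreal ((1 - xi) * theta * xi) * (\<integral>\<^sup>+x. ennreal (- ln x) \<partial>M))"
  using assms unfolding Ixi_def Let_def kap_def by simp

lemma Ixi_push_eta_xi_nonpos:
  assumes M: "prob_space M" "sets M = sets borel" and eta: "0 < eta"
    and xi: "- (gamma\<^sup>2) < xi" "xi \<le> 0"
  shows "Ixi eta theta gamma beta xi M = ennreal ((gamma\<^sup>2 - \<bar>xi\<bar>)\<^sup>2) *
     model_I (theta/eta) (\<lambda>x. x powr (theta/eta)) beta (gamma\<^sup>2 - \<bar>xi\<bar>) theta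
            (\<bar>xi\<bar> / (gamma\<^sup>2 - \<bar>xi\<bar>)) (- \<bar>xi\<bar>) (1 - gamma\<^sup>2) (distr M lborel (\<lambda>x. x powr eta))"
proof -
  have P: "(x powr eta) powr (theta/eta) = x powr theta" for x
    using eta by (simp add: powr_powr)
  have K: "(\<integral>\<^sup>+u. indicator {gamma\<^sup>2 - 1..\<bar>xi\<bar>} u * ennreal (- ln (1 - x powr theta * exp (beta * theta * u))) \<partial>lborel)
     = (\<integral>\<^sup>+u. indicator {- \<bar>xi\<bar>..1 - gamma\<^sup>2} u * ennreal (- ln (1 - x powr theta * exp (- beta * theta * u))) \<partial>lborel)"
    for x
    by (subst nn_integral_indicator_reflect) simp_all
  show ?thesis
    unfolding Ixi_xi_nonpos[OF xi(2)] K P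
      model_I_distr_powr[OF M eta powr_real_measurable[OF measurable_ident_sets[OF refl] borel_measurable_const]]
    by (rule ennreal_factor_square) (use xi eta in \<open>auto simp: field_simps power2_eq_square\<close>)
qed

lemma Ixi_push_eta_xi_mid:
  assumes M: "prob_space M" "sets M = sets borel" and eta: "0 < eta" and theta: "0 < theta"
    and gamma: "0 < gamma" and xi: "0 < xi" "xi \<le> 1 - gamma\<^sup>2"
  shows "Ixi eta theta gamma beta xi M = ennreal ((gamma\<^sup>2)\<^sup>2) *
     model_I (theta/eta) (\<lambda>x. x powr (theta/eta)) beta (gamma\<^sup>2) theta
            (theta * xi / (eta * gamma\<^sup>2)) 0 (1 - gamma\<^sup>2 - xi) (distr M lborel (\<lambda>x. x powr eta))"
proof -
  have P: "(x powr eta) powr (theta/eta) = x powr theta" for x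
    using eta by (simp add: powr_powr)
  show ?thesis
    unfolding Ixi_xi_mid[OF xi] P
      model_I_distr_powr[OF M eta powr_real_measurable[OF measurable_ident_sets[OF refl] borel_measurable_const]]
    by (rule ennreal_factor_square) (use gamma xi eta theta in \<open>auto simp: field_simps power2_eq_square\<close>)
qed

lemma Ixi_push_eta_xi_upper:
  assumes M: "prob_space M" "sets M = sets borel" and eta: "0 < eta" and theta: "0 < theta"
    and xi: "0 < xi" "1 - gamma\<^sup>2 < xi" "xi < 1"
  shows "Ixi eta theta gamma beta xi M = ennreal ((1 - xi)\<^sup>2) *
     model_I (theta/eta) (\<lambda>x. x) beta (1 - xi) eta
            (theta * xi / (eta * (1 - xi))) (1 - gamma\<^sup>2 - xi) 0 (distr M lborel (\<lambda>x. x powr eta))"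
proof -
  have P: "(x powr eta) powr (theta/eta) = x powr theta" for x
    using eta by (simp add: powr_powr)
  show ?thesis
    unfolding Ixi_xi_upper[OF xi(2,1)] P model_I_distr_powr[OF M eta measurable_ident_sets[OF refl]]
    by (rule ennreal_factor_square) (use xi eta theta in \<open>auto simp: field_simps power2_eq_square\<close>)
qed

lemma Ixi_push_theta_xi_nonpos:
  assumes M: "prob_space M" "sets M = sets borel" and eta: "0 < eta" and theta: "0 < theta"
    and xi: "- (gamma\<^sup>2) < xi" "xi \<le> 0"
  shows "Ixi eta theta gamma beta xi M = ennreal ((gamma\<^sup>2 - \<bar>xi\<bar>)\<^sup>2) *
     model_I (eta/theta) (\<lambda>x. x) beta (gamma\<^sup>2 - \<bar>xi\<bar>) theta
            (\<bar>xi\<bar> * eta / ((gamma\<^sup>2 - \<bar>xi\<bar>) * theta)) (- \<bar>xi\<bar>) (1 - gamma\<^sup>2) (distr M lborel (\<lambda>x. x powr theta))"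
proof -
  have P: "(x powr theta) powr (eta/theta) = x powr eta" for x
    using theta by (simp add: powr_powr)
  have H: "ln \<bar>x powr eta - y powr eta\<bar> + ln \<bar>x powr theta - y powr theta\<bar>
      = ln \<bar>x powr theta - y powr theta\<bar> + ln \<bar>x powr eta - y powr eta\<bar>" for x y
    by simp
  have K: "(\<integral>\<^sup>+u. indicator {gamma\<^sup>2 - 1..\<bar>xi\<bar>} u * ennreal (- ln (1 - x powr theta * exp (beta * theta * u))) \<partial>lborel)
     = (\<integral>\<^sup>+u. indicator {- \<bar>xi\<bar>..1 - gamma\<^sup>2} u * ennreal (- ln (1 - x powr theta * exp (- beta * theta * u))) \<partial>lborel)"
    for x
    by (subst nn_integral_indicator_reflect) simp_all
  show ?thesis
    unfolding Ixi_xi_nonpos[OF xi(2)] K P H model_I_distr_powr[OF M theta measurable_ident_sets[OF refl]]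
    by (rule ennreal_factor_square)
       (use xi eta theta mult_pos_pos[of "gamma\<^sup>2 - \<bar>xi\<bar>" theta] mult_nonneg_nonpos[of eta xi] in
         \<open>auto simp: field_simps power2_eq_square\<close>)
qed

lemma Ixi_push_theta_xi_mid:
  assumes M: "prob_space M" "sets M = sets borel" and eta: "0 < eta" and theta: "0 < theta"
    and gamma: "0 < gamma" and xi: "0 < xi" "xi \<le> 1 - gamma\<^sup>2"
  shows "Ixi eta theta gamma beta xi M = ennreal ((gamma\<^sup>2)\<^sup>2) *
     model_I (eta/theta) (\<lambda>x. x) beta (gamma\<^sup>2) theta
            (xi / gamma\<^sup>2) 0 (1 - gamma\<^sup>2 - xi) (distr M lborel (\<lambda>x. x powr theta))"
proof -
  have P: "(x powr theta) powr (eta/theta) = x powr eta" for x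
    using theta by (simp add: powr_powr)
  have H: "ln \<bar>x powr eta - y powr eta\<bar> + ln \<bar>x powr theta - y powr theta\<bar>
      = ln \<bar>x powr theta - y powr theta\<bar> + ln \<bar>x powr eta - y powr eta\<bar>" for x y
    by simp
  show ?thesis
    unfolding Ixi_xi_mid[OF xi] P H model_I_distr_powr[OF M theta measurable_ident_sets[OF refl]]
    by (rule ennreal_factor_square) (use gamma xi eta theta in \<open>auto simp: field_simps power2_eq_square\<close>)
qed

lemma Ixi_push_theta_xi_upper:
  assumes M: "prob_space M" "sets M = sets borel" and eta: "0 < eta" and theta: "0 < theta"
    and xi: "0 < xi" "1 - gamma\<^sup>2 < xi" "xi < 1"
  shows "Ixi eta theta gamma beta xi M = ennreal ((1 - xi)\<^sup>2) *
     model_I (eta/theta) (\<lambda>x. x powr (eta/theta)) beta (1 - xi) eta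
            (xi / (1 - xi)) (1 - gamma\<^sup>2 - xi) 0 (distr M lborel (\<lambda>x. x powr theta))"
proof -
  have P: "(x powr theta) powr (eta/theta) = x powr eta" for x
    using theta by (simp add: powr_powr)
  have H: "ln \<bar>x powr eta - y powr eta\<bar> + ln \<bar>x powr theta - y powr theta\<bar>
      = ln \<bar>x powr theta - y powr theta\<bar> + ln \<bar>x powr eta - y powr eta\<bar>" for x y
    by simp
  show ?thesis
    unfolding Ixi_xi_upper[OF xi(2,1)] P H
      model_I_distr_powr[OF M theta powr_real_measurable[OF measurable_ident_sets[OF refl] borel_measurable_const]]
    by (rule ennreal_factor_square) (use xi eta theta in \<open>auto simp: field_simps power2_eq_square\<close>)
qed

lemma is_min_Pfrak_kap_pos:
  assumes "is_min I (Pfrak gamma beta xi) mu" "0 < beta"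
  shows "0 < kap gamma xi"
proof -
  have "0 < beta * kap gamma xi"
    using assms(1) by (auto simp: is_min_def Pfrak_def intro: PP_imp_pos)
  then show ?thesis using assms(2) by (simp add: zero_less_mult_iff)
qed

lemma model_min_distr_powr:
  assumes r: "0 < r" and beta: "0 < beta" and kappa: "kap gamma xi = kappa"
    and min: "is_min (Ixi eta theta gamma beta xi) (Pfrak gamma beta xi) mu"
    and Ixi_eq: "\<And>M. prob_space M \<Longrightarrow> sets M = sets borel \<Longrightarrow> Ixi eta theta gamma beta xi M
        = ennreal (kappa\<^sup>2) * model_I nu phi beta kappa alpha m1 n1 n2 (distr M lborel (\<lambda>x. x powr r))"
  shows "\<exists>\<omega>. model_min nu phi beta kappa alpha m1 n1 n2 r gamma \<omega> \<and> pulled_back mu r \<omega>"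
proof (intro exI conjI)
  have "0 < kappa" using is_min_Pfrak_kap_pos[OF min beta] kappa by simp
  have min_PP: "is_min (Ixi eta theta gamma beta xi) (PP (beta * kappa) (exp (- beta * (gamma\<^sup>2 - kappa)))) mu"
    using min unfolding Pfrak_def kappa .
  have "is_min (model_I nu phi beta kappa alpha m1 n1 n2)
      (PP (beta * kappa * r) (exp (- beta * (gamma\<^sup>2 - kappa)) powr r)) (distr mu lborel (\<lambda>x. x powr r))"
    using \<open>0 < kappa\<close> by (intro is_min_distr_powr[OF r _ _ min_PP]) (auto simp: Ixi_eq PP_prob_space PP_sets)
  then show "model_min nu phi beta kappa alpha m1 n1 n2 r gamma (distr mu lborel (\<lambda>x. x powr r))"
    unfolding model_min_def by (simp add: exp_powr_real mult_ac)
  show "pulled_back mu r (distr mu lborel (\<lambda>x. x powr r))"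
    using min r by (auto simp: is_min_def Pfrak_def intro: pulled_back_distr_powr)
qed

theorem corollary1p5:
  fixes eta theta gamma beta xi :: real and mu :: "real measure"
  assumes "eta > 0" "theta > 0" "0 < gamma" "gamma < 1" "beta > 0"
    and "- (gamma\<^sup>2) < xi" "xi \<le> 1"
    and "theta \<noteq> eta"
    and "is_min (Ixi eta theta gamma beta xi) (Pfrak gamma beta xi) mu"
    and "\<forall>N. is_min (Ixi eta theta gamma beta xi) (Pfrak gamma beta xi) N \<longrightarrow> N = mu"
  shows
   "(theta > eta \<longrightarrow>
      (xi \<le> 0 \<longrightarrow> (\<exists>\<omega>. model_min (theta/eta) (\<lambda>x. x powr (theta/eta)) beta (gamma\<^sup>2 - \<bar>xi\<bar>) theta
            (\<bar>xi\<bar> / (gamma\<^sup>2 - \<bar>xi\<bar>)) (- \<bar>xi\<bar>) (1 - gamma\<^sup>2) eta gamma \<omega> \<and> pulled_back mu eta \<omega>))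
    \<and> (0 < xi \<and> xi \<le> 1 - gamma\<^sup>2 \<longrightarrow> (\<exists>\<omega>. model_min (theta/eta) (\<lambda>x. x powr (theta/eta)) beta (gamma\<^sup>2) theta
            (theta * xi / (eta * gamma\<^sup>2)) 0 (1 - gamma\<^sup>2 - xi) eta gamma \<omega> \<and> pulled_back mu eta \<omega>))
    \<and> (1 - gamma\<^sup>2 < xi \<longrightarrow> (\<exists>\<omega>. model_min (theta/eta) (\<lambda>x. x) beta (1 - xi) eta
            (theta * xi / (eta * (1 - xi))) (1 - gamma\<^sup>2 - xi) 0 eta gamma \<omega> \<and> pulled_back mu eta \<omega>)))
  \<and> (eta > theta \<longrightarrow>
      (xi \<le> 0 \<longrightarrow> (\<exists>\<omega>. model_min (eta/theta) (\<lambda>x. x) beta (gamma\<^sup>2 - \<bar>xi\<bar>) theta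
            (\<bar>xi\<bar> * eta / ((gamma\<^sup>2 - \<bar>xi\<bar>) * theta)) (- \<bar>xi\<bar>) (1 - gamma\<^sup>2) theta gamma \<omega> \<and> pulled_back mu theta \<omega>))
    \<and> (0 < xi \<and> xi \<le> 1 - gamma\<^sup>2 \<longrightarrow> (\<exists>\<omega>. model_min (eta/theta) (\<lambda>x. x) beta (gamma\<^sup>2) theta
            (xi / gamma\<^sup>2) 0 (1 - gamma\<^sup>2 - xi) theta gamma \<omega> \<and> pulled_back mu theta \<omega>))
    \<and> (1 - gamma\<^sup>2 < xi \<longrightarrow> (\<exists>\<omega>. model_min (eta/theta) (\<lambda>x. x powr (eta/theta)) beta (1 - xi) eta
            (xi / (1 - xi)) (1 - gamma\<^sup>2 - xi) 0 theta gamma \<omega> \<and> pulled_back mu theta \<omega>)))"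
proof -
  note eta = assms(1) and theta = assms(2) and beta = assms(5) and min = assms(9)
  (* Pfrak is empty when kap vanishes, i.e. for xi = 1. *)
  have "0 < kap gamma xi" by (rule is_min_Pfrak_kap_pos[OF min beta])
  moreover have "gamma\<^sup>2 < 1" using assms(3,4) by (simp add: abs_square_less_1)
  ultimately have upper: "0 < xi \<and> xi < 1" if "1 - gamma\<^sup>2 < xi"
    using that by (auto simp: kap_def split: if_splits)
  show ?thesis
    by (intro conjI impI model_min_distr_powr[OF eta beta _ min] model_min_distr_powr[OF theta beta _ min]
        Ixi_push_eta_xi_nonpos Ixi_push_eta_xi_mid Ixi_push_eta_xi_upper
        Ixi_push_theta_xi_nonpos Ixi_push_theta_xi_mid Ixi_push_theta_xi_upper)
      (use assms upper in \<open>auto simp: kap_def\<close>)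
qed

end
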